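(* Consider the scheme (EQRF1) $$y_{n+1}=e^{\tau A}y_n+\tau\varphi_1(\tau A)\,h\bigl((t_n+c_1\tau)^r\bigr),\qquad n=0,\dots,N-1,$$ started from the exact initial value $y_0$, with a collocation point $c_1\in[0,1]$, and let $\epsilon_n=y(t_n)-y_n$. Then: \begin{enumerate} \item if $h$ is differentiable on $[0,\infty)$ with bounded derivative, then $\|\epsilon_n\|\le C\tau$; \item if $h$ is twice differentiable on $[0,\infty)$ with bounded derivatives $h',h''$, if $h'(x)\in\mathcal{D}(A)$ for all $x\ge0$ with $x\mapsto Ah'(x)$ bounded, and if $c_1=\tfrac12$, then $\|\epsilon_n\|\le C\tau^{1+r}$. \end{enumerate} In both cases the bound holds for all $N\in\mathbb{N}$ and all $0\le n\le N$, with a constant $C$ that may depend on $T$, $r$, $h$ and the semigroup bound, but not on $n$ or $\tau$.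
   Context: $(X,\|\cdot\|)$ is a Banach space and $A:\mathcal{D}(A)\subset X\to X$ is a linear operator generating a strongly continuous semigroup $\{e^{tA}\}_{t\ge0}$ on $X$. Fix $T>0$, $0<r<1$, $y_0\in X$ and $h:[0,\infty)\to X$. The problem is $y'(t)=Ay(t)+h(t^r)$, $y(0)=y_0$, $t\in[0,T]$, whose (mild) solution is given by the variation-of-constants formula $y(t)=e^{tA}y_0+\int_0^te^{(t-s)A}h(s^r)\,ds$; equivalently $y(t_{n+1})=e^{\tau A}y(t_n)+\int_0^\tau e^{(\tau-s)A}h((t_n+s)^r)\,ds$. Time grid: $N\in\mathbb{N}$, $\tau=T/N$, $t_n=n\tau$. The operator $\varphi_1(\tau A)$ is defined by $\tau\varphi_1(\tau A)v=\int_0^\tau e^{(\tau-s)A}v\,ds$ for $v\in X$. *)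

theory Defs
  imports "HOL-Analysis.Analysis"
begin

definition strongly_continuous_semigroup :: "(real \<Rightarrow> 'a::banach \<Rightarrow> 'a) \<Rightarrow> bool" where
  "strongly_continuous_semigroup S \<longleftrightarrow>
     (\<forall>t\<ge>0. bounded_linear (S t)) \<and>
     S 0 = id \<and>
     (\<forall>t\<ge>0. \<forall>s\<ge>0. S (t + s) = S t \<circ> S s) \<and>
     (\<forall>x. ((\<lambda>t. S t x) \<longlongrightarrow> x) (at_right 0))"

definition semigroup_generator ::
    "(real \<Rightarrow> 'a::banach \<Rightarrow> 'a) \<Rightarrow> 'a set \<Rightarrow> ('a \<Rightarrow> 'a) \<Rightarrow> bool" where
  "semigroup_generator S D A \<longleftrightarrow>
     D = {x. \<exists>y. ((\<lambda>t. (1 / t) *\<^sub>R (S t x - x)) \<longlongrightarrow> y) (at_right 0)} \<and>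
     (\<forall>x\<in>D. ((\<lambda>t. (1 / t) *\<^sub>R (S t x - x)) \<longlongrightarrow> A x) (at_right 0))"

text \<open>phi_1(tau A) v, defined by  tau phi_1(tau A) v = int_0^tau e^{(tau-s)A} v ds.\<close>
definition phi1 :: "(real \<Rightarrow> 'a::banach \<Rightarrow> 'a) \<Rightarrow> real \<Rightarrow> 'a \<Rightarrow> 'a" where
  "phi1 S \<tau> v = (1 / \<tau>) *\<^sub>R integral {0..\<tau>} (\<lambda>s. S (\<tau> - s) v)"

text \<open>Mild solution of y' = A y + h(t^r), y(0) = y0 (variation-of-constants formula).\<close>
definition mild_sol :: "(real \<Rightarrow> 'a::banach \<Rightarrow> 'a) \<Rightarrow> (real \<Rightarrow> 'a) \<Rightarrow> real \<Rightarrow> 'a \<Rightarrow> real \<Rightarrow> 'a" where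
  "mild_sol S h r y0 t = S t y0 + integral {0..t} (\<lambda>s. S (t - s) (h (s powr r)))"

primrec eqrf1 :: "(real \<Rightarrow> 'a::banach \<Rightarrow> 'a) \<Rightarrow> (real \<Rightarrow> 'a) \<Rightarrow> real \<Rightarrow> real \<Rightarrow> real \<Rightarrow> 'a \<Rightarrow> nat \<Rightarrow> 'a" where
  "eqrf1 S h r c1 \<tau> y0 0 = y0"
| "eqrf1 S h r c1 \<tau> y0 (Suc n) =
     S \<tau> (eqrf1 S h r c1 \<tau> y0 n) + \<tau> *\<^sub>R phi1 S \<tau> (h ((real n * \<tau> + c1 * \<tau>) powr r))"

end

theory Submission
  imports Defs
begin

(*
  The exact solution satisfies the recursion of the scheme up to the quadrature error
    delta(t) = integral over [0, tau] of S(tau - s) (h((t + s)^r) - h((t + c1 tau)^r)) ds,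
  so the error at t_n is the discrete variation-of-constants sum of the delta(t_k), and it is
  bounded by M * sum_k |delta(t_k)|, where M bounds |S(t)| on [0, T] (uniform boundedness).
  Since h' is bounded, |delta(t)| <= M |h'|_oo tau ((t + tau)^r - t^r), which telescopes to O(tau).
  For c1 = 1/2 and t >= tau, linearize G(y) = h(y^r) at the midpoint m = t + tau/2. The linear part
  contributes the integral of (s - tau/2) S(tau - s) G'(m), which is O(tau^3 m^(r-1) |A h'|): the
  weight has mean zero and the orbit of a point of the domain of A is Lipschitz. The remainder is
  controlled by the variation of G' on [t, t + tau], which telescopes through the monotone
  functions y^r and y^(r-1). Only the first step, where y^(r-1) is unbounded, needs the
  first-order estimate, which is O(tau^(1+r)) there.
*)

lemma norm_le_of_bounded_on_ball:
  fixes f :: "'a::real_normed_vector \<Rightarrow> 'b::real_normed_vector"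
  assumes f: "linear f" and e: "e > 0" and bnd: "\<And>x. x \<in> ball x0 e \<Longrightarrow> norm (f x) \<le> k"
  shows "norm (f y) \<le> (4 * k / e) * norm y"
proof (cases "y = 0")
  case True
  then show ?thesis using f by (simp add: linear_0)
next
  case False
  define c where "c = e / 2 / norm y"
  have c: "c > 0" and nc: "norm (c *\<^sub>R y) = e / 2"
    using False e by (simp_all add: c_def)
  have "norm (f (x0 + c *\<^sub>R y)) \<le> k" "norm (f x0) \<le> k"
    using bnd e nc by (auto simp: dist_norm)
  moreover have "f (c *\<^sub>R y) = f (x0 + c *\<^sub>R y) - f x0"
    using f by (simp add: linear_add)
  ultimately have "norm (f (c *\<^sub>R y)) \<le> 2 * k"
    by (metis mult_2 norm_triangle_ineq4 order_trans add_mono)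
  then have "c * norm (f y) \<le> 2 * k"
    using f c by (simp add: linear_scale)
  then show ?thesis
    using c False e by (simp add: c_def field_simps)
qed

lemma banach_steinhaus:
  fixes F :: "('a::banach \<Rightarrow> 'b::real_normed_vector) set"
  assumes lin: "\<And>f. f \<in> F \<Longrightarrow> bounded_linear f"
    and pointwise: "\<And>x. \<exists>B. \<forall>f\<in>F. norm (f x) \<le> B"
  shows "\<exists>M. \<forall>f\<in>F. \<forall>x. norm (f x) \<le> M * norm x"
proof -
  define E where "E k = (\<Inter>f\<in>F. {x. norm (f x) \<le> real k})" for k :: nat
  have closed_E: "closed (E k)" for k
    unfolding E_def
    by (intro closed_INT ballI closed_Collect_le continuous_intros
        linear_continuous_on[OF lin]) auto
  have "\<Union>(range E) = UNIV"
  proof safe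
    fix x
    obtain B where "\<forall>f\<in>F. norm (f x) \<le> B" using pointwise by blast
    then have "x \<in> E (nat \<lceil>B\<rceil>)" unfolding E_def by (auto intro: order_trans[OF _ real_nat_ceiling_ge])
    then show "x \<in> \<Union>(range E)" by blast
  qed auto
  then have "\<exists>k. interior (E k) \<noteq> {}"
    using Baire_category_alt[of euclidean "range E"] closed_E
    by (auto simp: completely_metrizable_space_euclidean) blast
  then obtain k x0 e where "e > 0" "ball x0 e \<subseteq> E k"
    by (meson all_not_in_conv mem_interior)
  then have "norm (f y) \<le> (4 * real k / e) * norm y" if "f \<in> F" for f y
    using that lin by (intro norm_le_of_bounded_on_ball bounded_linear.linear)
      (auto simp: E_def)
  then show ?thesis by blast
qed

lemma norm_diff_le_of_vector_derivative_bound: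
  fixes f f' :: "real \<Rightarrow> 'b::real_normed_vector"
  assumes "convex S"
    and deriv: "\<And>x. x \<in> S \<Longrightarrow> (f has_vector_derivative f' x) (at x within S)"
    and bnd: "\<And>x. x \<in> S \<Longrightarrow> norm (f' x) \<le> B" and "x \<in> S" "y \<in> S"
  shows "norm (f x - f y) \<le> B * \<bar>x - y\<bar>"
proof -
  have "norm (f x - f y) \<le> B * norm (x - y)"
  proof (rule differentiable_bound[where f'="\<lambda>x t. t *\<^sub>R f' x"])
    fix z assume z: "z \<in> S"
    then show "(f has_derivative (\<lambda>t. t *\<^sub>R f' z)) (at z within S)"
      using deriv by (simp add: has_vector_derivative_def)
    show "onorm (\<lambda>t. t *\<^sub>R f' z) \<le> B"
      using bnd[OF z] by (simp add: onorm_scaleR_left[OF bounded_linear_ident] onorm_id)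
  qed (use assms in auto)
  then show ?thesis by simp
qed

lemma abs_powr_diff_le:
  fixes a b x y r :: real
  assumes "0 \<le> a" "x \<in> {a..b}" "y \<in> {a..b}" "0 \<le> r"
  shows "\<bar>x powr r - y powr r\<bar> \<le> b powr r - a powr r"
proof -
  have "a powr r \<le> x powr r" "x powr r \<le> b powr r" "a powr r \<le> y powr r" "y powr r \<le> b powr r"
    using assms by (auto intro!: powr_mono2)
  then show ?thesis by linarith
qed

lemma abs_powr_diff_le_of_nonpos:
  fixes a b x y r :: real
  assumes "0 < a" "x \<in> {a..b}" "y \<in> {a..b}" "r \<le> 0"
  shows "\<bar>x powr r - y powr r\<bar> \<le> a powr r - b powr r"
proof -
  have "x powr r \<le> a powr r" "b powr r \<le> x powr r" "y powr r \<le> a powr r" "b powr r \<le> y powr r"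
    using assms by (auto intro!: powr_mono2')
  then show ?thesis by linarith
qed

lemma continuous_on_comp_powr:
  fixes h :: "real \<Rightarrow> 'b::real_normed_vector"
  assumes hd: "\<forall>x\<ge>0. (h has_vector_derivative h' x) (at x within {0..})" and r: "r > 0"
  shows "continuous_on {0..} (\<lambda>s. h (s powr r))"
proof -
  have "continuous_on {0..} h"
    unfolding continuous_on_eq_continuous_within using hd has_vector_derivative_continuous by blast
  moreover have "continuous_on {0..} (\<lambda>s::real. s powr r)"
    using r by (intro continuous_on_powr') (auto intro: continuous_intros)
  ultimately show ?thesis
    by (rule continuous_on_compose2) auto
qed

lemma has_vector_derivative_comp_powr:
  assumes "(h has_vector_derivative h' (y powr r)) (at (y powr r) within {0..})" and "y > 0"
  shows "((\<lambda>y. h (y powr r)) has_vector_derivative (r * y powr (r - 1)) *\<^sub>R h' (y powr r)) (at y within I)"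
proof -
  have "((\<lambda>y. y powr r) has_vector_derivative r * y powr (r - 1)) (at y within I)"
    using has_real_derivative_powr[OF \<open>y > 0\<close>, of r]
    by (simp add: has_real_derivative_iff_has_vector_derivative[symmetric] has_field_derivative_at_within)
  moreover have "(h has_vector_derivative h' (y powr r)) (at (y powr r) within (\<lambda>y. y powr r) ` I)"
    using assms(1) by (rule has_vector_derivative_within_subset) auto
  ultimately show ?thesis
    using vector_diff_chain_within[of "\<lambda>y. y powr r"] by (simp add: o_def)
qed

lemma norm_chain_powr_derivative_diff_le:
  fixes h' :: "real \<Rightarrow> 'b::real_normed_vector"
  assumes bound: "\<And>x. x \<ge> 0 \<Longrightarrow> norm (h' x) \<le> L1"
    and lip: "\<And>x y. x \<ge> 0 \<Longrightarrow> y \<ge> 0 \<Longrightarrow> norm (h' x - h' y) \<le> L2 * \<bar>x - y\<bar>"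
    and t: "t > 0" and y: "y \<in> {t..t + \<tau>}" and m: "m \<in> {t..t + \<tau>}" and r: "0 < r" "r \<le> 1"
  shows "norm ((r * y powr (r - 1)) *\<^sub>R h' (y powr r) - (r * m powr (r - 1)) *\<^sub>R h' (m powr r))
    \<le> L1 * (t powr (r - 1) - (t + \<tau>) powr (r - 1)) + t powr (r - 1) * L2 * ((t + \<tau>) powr r - t powr r)"
proof -
  have "norm (h' 1 - h' 0) \<le> L2"
    using lip[of 1 0] by simp
  then have "L2 \<ge> 0"
    using norm_ge_zero order_trans by blast
  have "r * \<bar>y powr (r - 1) - m powr (r - 1)\<bar> \<le> t powr (r - 1) - (t + \<tau>) powr (r - 1)"
    using abs_powr_diff_le_of_nonpos[of t y "t + \<tau>" m "r - 1"] t y m r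
    by (smt (verit) abs_ge_zero mult_left_le_one_le)
  moreover have "(t + \<tau>) powr (r - 1) \<le> t powr (r - 1)"
    using t y r by (intro powr_mono2') auto
  moreover have "norm (h' (y powr r)) \<le> L1" and "L1 \<ge> 0"
    using bound[of "y powr r"] bound[of 0] by (auto intro: order_trans[OF norm_ge_zero])
  ultimately have first: "r * \<bar>y powr (r - 1) - m powr (r - 1)\<bar> * norm (h' (y powr r))
      \<le> (t powr (r - 1) - (t + \<tau>) powr (r - 1)) * L1"
    using r by (intro mult_mono) auto
  have "r * m powr (r - 1) \<le> m powr (r - 1)"
    using r by (intro mult_left_le_one_le) auto
  also have "\<dots> \<le> t powr (r - 1)"
    using m t r by (intro powr_mono2') auto
  finally have "r * m powr (r - 1) \<le> t powr (r - 1)" .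
  moreover have "norm (h' (y powr r) - h' (m powr r)) \<le> L2 * ((t + \<tau>) powr r - t powr r)"
    using lip[of "y powr r" "m powr r"] abs_powr_diff_le[of t y "t + \<tau>" m r] t y m r \<open>L2 \<ge> 0\<close>
    by (smt (verit) mult_left_mono powr_ge_zero)
  ultimately have second: "r * m powr (r - 1) * norm (h' (y powr r) - h' (m powr r))
      \<le> t powr (r - 1) * (L2 * ((t + \<tau>) powr r - t powr r))"
    using r by (intro mult_mono) auto
  have "(r * y powr (r - 1)) *\<^sub>R h' (y powr r) - (r * m powr (r - 1)) *\<^sub>R h' (m powr r)
      = (r * (y powr (r - 1) - m powr (r - 1))) *\<^sub>R h' (y powr r)
        + (r * m powr (r - 1)) *\<^sub>R (h' (y powr r) - h' (m powr r))"
    by (simp add: algebra_simps)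
  then have "norm ((r * y powr (r - 1)) *\<^sub>R h' (y powr r) - (r * m powr (r - 1)) *\<^sub>R h' (m powr r))
      \<le> norm ((r * (y powr (r - 1) - m powr (r - 1))) *\<^sub>R h' (y powr r))
        + norm ((r * m powr (r - 1)) *\<^sub>R (h' (y powr r) - h' (m powr r)))"
    by (metis norm_triangle_ineq)
  also have "\<dots> = r * \<bar>y powr (r - 1) - m powr (r - 1)\<bar> * norm (h' (y powr r))
        + r * m powr (r - 1) * norm (h' (y powr r) - h' (m powr r))"
    using r by (simp add: abs_mult)
  also have "\<dots> \<le> (t powr (r - 1) - (t + \<tau>) powr (r - 1)) * L1
        + t powr (r - 1) * (L2 * ((t + \<tau>) powr r - t powr r))"
    using first second by (rule add_mono)
  finally show ?thesis
    by (simp add: algebra_simps)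
qed

lemma norm_comp_powr_midpoint_linearization_le:
  fixes h h' :: "real \<Rightarrow> 'b::real_normed_vector"
  assumes hd: "\<forall>x\<ge>0. (h has_vector_derivative h' x) (at x within {0..})"
    and bound: "\<And>x. x \<ge> 0 \<Longrightarrow> norm (h' x) \<le> L1"
    and lip: "\<And>x y. x \<ge> 0 \<Longrightarrow> y \<ge> 0 \<Longrightarrow> norm (h' x - h' y) \<le> L2 * \<bar>x - y\<bar>"
    and \<tau>: "\<tau> > 0" and t: "t \<ge> \<tau>" and r: "0 < r" "r < 1" and s: "s \<in> {0..\<tau>}"
  shows "norm (h ((t + s) powr r) - h ((t + \<tau> / 2) powr r)
      - (s - \<tau> / 2) *\<^sub>R ((r * (t + \<tau> / 2) powr (r - 1)) *\<^sub>R h' ((t + \<tau> / 2) powr r)))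
    \<le> \<tau> * (L1 * (t powr (r - 1) - (t + \<tau>) powr (r - 1)) + \<tau> powr (r - 1) * L2 * ((t + \<tau>) powr r - t powr r))"
    (is "_ \<le> \<tau> * ?Q")
proof -
  define m where "m = t + \<tau> / 2"
  define G' where "G' y = (r * y powr (r - 1)) *\<^sub>R h' (y powr r)" for y
  have m: "m \<in> {t..t + \<tau>}" and t0: "t > 0"
    using \<tau> t by (auto simp: m_def)
  have "t powr (r - 1) \<le> \<tau> powr (r - 1)"
    using t \<tau> r by (intro powr_mono2') auto
  moreover have "norm (h' 1 - h' 0) \<le> L2"
    using lip[of 1 0] by simp
  then have "L2 * ((t + \<tau>) powr r - t powr r) \<ge> 0"
    using t0 \<tau> r by (intro mult_nonneg_nonneg) (auto intro: order_trans[OF norm_ge_zero] powr_mono2)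
  ultimately have "t powr (r - 1) * L2 * ((t + \<tau>) powr r - t powr r)
      \<le> \<tau> powr (r - 1) * L2 * ((t + \<tau>) powr r - t powr r)"
    by (metis mult.assoc mult_right_mono)
  then have Q: "norm (G' y - G' m) \<le> ?Q" if y: "y \<in> {t..t + \<tau>}" for y
    using norm_chain_powr_derivative_diff_le[of h' L1 L2 t y \<tau> m r] bound lip t0 y m r
    unfolding G'_def by fastforce
  have "norm (h ((t + s) powr r) - h (m powr r) - (t + s - m) *\<^sub>R G' m) \<le> norm (t + s - m) * ?Q"
  proof (rule vector_differentiable_bound_linearization[where S="{t..t + \<tau>}"])
    fix y :: real
    assume "y \<in> {t..t + \<tau>}"
    then show "((\<lambda>y. h (y powr r)) has_vector_derivative G' y) (at y within {t..t + \<tau>})"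
      unfolding G'_def using hd t0 by (intro has_vector_derivative_comp_powr) auto
  qed (use s m Q in \<open>auto simp: closed_segment_eq_real_ivl\<close>)
  also have "\<dots> \<le> \<tau> * ?Q"
    using s Q[OF m] by (intro mult_right_mono) (auto simp: m_def)
  finally show ?thesis
    by (simp add: m_def G'_def algebra_simps)
qed

lemma powr_one_add_eq:
  fixes \<tau> :: real
  assumes "\<tau> > 0"
  shows "\<tau> powr (1 + r) = \<tau> powr r * \<tau>" and "\<tau> powr (1 + r) = \<tau> ^ 2 * \<tau> powr (r - 1)"
proof -
  show "\<tau> powr (1 + r) = \<tau> powr r * \<tau>"
    using assms by (simp add: powr_add)
  have "\<tau> powr (1 + r) = \<tau> powr 2 * \<tau> powr (r - 1)"
    by (simp add: powr_add[symmetric])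
  then show "\<tau> powr (1 + r) = \<tau> ^ 2 * \<tau> powr (r - 1)"
    using assms by (simp add: powr_realpow)
qed

lemma sum_second_order_step_bounds_le:
  fixes \<tau> T a b c :: real
  assumes \<tau>: "\<tau> > 0" and mT: "real (Suc m) * \<tau> \<le> T" and r: "r > 0"
    and "a \<ge> 0" "b \<ge> 0" "c \<ge> 0"
  shows "(\<Sum>k<m. \<tau> powr (1 + r) * (a * \<tau> + b * ((real (Suc (Suc k)) * \<tau>) powr r - (real (Suc k) * \<tau>) powr r))
              + c * \<tau> ^ 2 * ((real (Suc k) * \<tau>) powr (r - 1) - (real (Suc (Suc k)) * \<tau>) powr (r - 1)))
    \<le> \<tau> powr (1 + r) * (a * T + b * T powr r + c)"
proof -
  define F where "F k = (real (Suc k) * \<tau>) powr r" for k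
  define g where "g k = (real (Suc k) * \<tau>) powr (r - 1)" for k
  have "(\<Sum>k<m. \<tau> powr (1 + r) * (a * \<tau> + b * (F (Suc k) - F k)) + c * \<tau> ^ 2 * (g k - g (Suc k)))
      = \<tau> powr (1 + r) * (a * (real m * \<tau>) + b * (F m - F 0)) + c * \<tau> ^ 2 * (g 0 - g m)"
  proof -
    have "(\<Sum>k<m. \<tau> powr (1 + r) * (a * \<tau> + b * (F (Suc k) - F k)) + c * \<tau> ^ 2 * (g k - g (Suc k)))
        = \<tau> powr (1 + r) * (a * (real m * \<tau>) + b * (\<Sum>k<m. F (Suc k) - F k))
          + c * \<tau> ^ 2 * (\<Sum>k<m. g k - g (Suc k))"
      by (simp add: sum.distrib sum_distrib_left distrib_left ac_simps)
    then show ?thesis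
      by (simp only: sum_lessThan_telescope sum_lessThan_telescope')
  qed
  also have "\<dots> \<le> \<tau> powr (1 + r) * (a * T + b * T powr r) + c * \<tau> ^ 2 * \<tau> powr (r - 1)"
  proof -
    have "F m \<le> T powr r"
      unfolding F_def using mT \<tau> r by (intro powr_mono2) auto
    moreover have "F 0 \<ge> 0"
      by (simp add: F_def)
    ultimately have "F m - F 0 \<le> T powr r"
      by linarith
    moreover have "real m * \<tau> \<le> T"
      using mT \<tau> by (simp add: algebra_simps)
    ultimately have "a * (real m * \<tau>) + b * (F m - F 0) \<le> a * T + b * T powr r"
      using \<open>a \<ge> 0\<close> \<open>b \<ge> 0\<close> by (intro add_mono mult_left_mono)
    moreover have "g 0 - g m \<le> \<tau> powr (r - 1)"
      by (simp add: g_def)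
    ultimately show ?thesis
      using \<open>c \<ge> 0\<close> by (simp add: add_mono mult_left_mono)
  qed
  also have "\<dots> = \<tau> powr (1 + r) * (a * T + b * T powr r + c)"
    using powr_one_add_eq(2)[OF \<tau>, of r] by (simp add: algebra_simps)
  finally show ?thesis
    by (simp add: F_def g_def)
qed

locale C0_semigroup =
  fixes S :: "real \<Rightarrow> 'a::banach \<Rightarrow> 'a"
  assumes strongly_continuous: "strongly_continuous_semigroup S"
begin

lemma bounded_linear_S: "t \<ge> 0 \<Longrightarrow> bounded_linear (S t)"
  using strongly_continuous unfolding strongly_continuous_semigroup_def by blast

lemma S_0 [simp]: "S 0 x = x"
  using strongly_continuous unfolding strongly_continuous_semigroup_def by simp

lemma S_add: "t \<ge> 0 \<Longrightarrow> s \<ge> 0 \<Longrightarrow> S (t + s) x = S t (S s x)"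
  using strongly_continuous unfolding strongly_continuous_semigroup_def by simp

lemma S_diff: "t \<ge> 0 \<Longrightarrow> S t (x - y) = S t x - S t y"
  and S_plus: "t \<ge> 0 \<Longrightarrow> S t (x + y) = S t x + S t y"
  and S_scaleR: "t \<ge> 0 \<Longrightarrow> S t (c *\<^sub>R x) = c *\<^sub>R S t x"
  and S_sum: "t \<ge> 0 \<Longrightarrow> S t (sum g K) = (\<Sum>k\<in>K. S t (g k))"
  using bounded_linear_S[THEN bounded_linear.linear]
  by (simp_all add: linear_diff linear_add linear_scale linear_sum)

lemma continuous_orbit_at_0: "continuous (at 0 within {0..}) (\<lambda>t. S t x)"
  using strongly_continuous
  unfolding strongly_continuous_semigroup_def continuous_within at_within_Ici_at_right
  by simp

lemma orbit_near_identity: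
  assumes "e > 0"
  obtains b where "b > 0" "\<And>t. 0 \<le> t \<Longrightarrow> t < b \<Longrightarrow> norm (S t x - x) < e"
proof -
  have "\<forall>\<^sub>F t in at_right 0. dist (S t x) x < e"
    using strongly_continuous assms unfolding strongly_continuous_semigroup_def tendsto_iff by blast
  then obtain b where b: "b > 0" "\<And>t. 0 < t \<Longrightarrow> t < b \<Longrightarrow> dist (S t x) x < e"
    unfolding eventually_at_right_field by auto
  show ?thesis
  proof (rule that[OF b(1)])
    fix t :: real
    assume "0 \<le> t" "t < b"
    then show "norm (S t x - x) < e"
      using b(2)[of t] assms by (cases "t = 0") (simp_all add: dist_norm)
  qed
qed

lemma locally_bounded: "\<exists>\<delta>>0. \<exists>M. \<forall>t\<in>{0..\<delta>}. \<forall>x. norm (S t x) \<le> M * norm x"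
proof (rule ccontr)
  assume "\<not> ?thesis"
  then have "\<not> (\<forall>t\<in>{0..1 / Suc n}. \<forall>x. norm (S t x) \<le> real n * norm x)" for n
    by (metis divide_pos_pos of_nat_0_less_iff zero_less_Suc zero_less_one)
  then have "\<exists>t x. t \<in> {0..1 / Suc n} \<and> norm (S t x) > real n * norm x" for n
    by (meson not_le)
  then obtain t x where t: "\<And>n. t n \<in> {0..1 / Suc n}"
    and x: "\<And>n. norm (S (t n) (x n)) > real n * norm (x n)"
    by metis
  have "t \<longlonglongrightarrow> 0"
    using t by (intro tendsto_sandwich[OF _ _ tendsto_const LIMSEQ_inverse_real_of_nat])
      (auto simp: divide_inverse)
  then have "(\<lambda>n. S (t n) y) \<longlonglongrightarrow> y" for y
    using continuous_within_tendsto_compose'[OF continuous_orbit_at_0, of t] t by simp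
  then have "Bseq (\<lambda>n. S (t n) y)" for y
    by (intro convergent_imp_Bseq convergentI)
  then have "\<exists>B. \<forall>n. norm (S (t n) y) \<le> B" for y
    unfolding Bseq_def by blast
  then have "\<exists>B. \<forall>f\<in>range (\<lambda>n. S (t n)). norm (f y) \<le> B" for y
    by auto
  moreover have "bounded_linear (S (t n))" for n
    using t by (intro bounded_linear_S) simp
  ultimately have "\<exists>M. \<forall>f\<in>range (\<lambda>n. S (t n)). \<forall>y. norm (f y) \<le> M * norm y"
    by (intro banach_steinhaus) blast+
  then obtain M where M: "\<And>n y. norm (S (t n) y) \<le> M * norm y"
    by blast
  obtain n :: nat where "M < real n"
    using reals_Archimedean2 by blast
  then have "M * norm (x n) \<le> real n * norm (x n)"
    by (simp add: mult_right_mono)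
  then show False
    using x[of n] M[of n "x n"] by linarith
qed

lemma bounded_on_interval:
  obtains M where "M \<ge> 1" "\<And>t x. t \<in> {0..L} \<Longrightarrow> norm (S t x) \<le> M * norm x"
proof -
  obtain \<delta> M0 where \<delta>: "\<delta> > 0" and M0: "\<And>t x. t \<in> {0..\<delta>} \<Longrightarrow> norm (S t x) \<le> M0 * norm x"
    using locally_bounded by blast
  define M where "M = max 1 M0"
  have M: "M \<ge> 1" "\<And>t x. t \<in> {0..\<delta>} \<Longrightarrow> norm (S t x) \<le> M * norm x"
    unfolding M_def using M0 by (auto intro: order_trans[OF _ mult_right_mono[OF max.cobounded2]])
  have "\<forall>t\<in>{0..real k * \<delta>}. \<forall>x. norm (S t x) \<le> M ^ k * norm x" for k
  proof (induction k)
    case (Suc k)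
    show ?case
    proof (intro ballI allI)
      fix t x
      assume t: "t \<in> {0..real (Suc k) * \<delta>}"
      show "norm (S t x) \<le> M ^ Suc k * norm x"
      proof (cases "t \<le> \<delta>")
        case True
        then have "norm (S t x) \<le> M * norm x" using M t by auto
        also have "\<dots> \<le> M ^ Suc k * norm x"
          using M power_increasing[of 1 "Suc k" M] by (intro mult_right_mono) auto
        finally show ?thesis .
      next
        case False
        then have "S t x = S (t - \<delta>) (S \<delta> x)" and "t - \<delta> \<in> {0..real k * \<delta>}"
          using S_add[of "t - \<delta>" \<delta>] t \<delta> by (auto simp: algebra_simps)
        then have "norm (S t x) \<le> M ^ k * norm (S \<delta> x)" using Suc.IH by auto
        also have "\<dots> \<le> M ^ k * (M * norm x)"
          using M \<delta> by (intro mult_left_mono) auto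
        finally show ?thesis by (simp add: algebra_simps)
      qed
    qed
  qed simp
  moreover obtain k :: nat where "L / \<delta> \<le> real k"
    using real_nat_ceiling_ge by blast
  then have "L \<le> real k * \<delta>" using \<delta> by (simp add: field_simps)
  ultimately show ?thesis
    using M by (intro that[of "M ^ k"]) auto
qed

lemma continuous_on_orbit: "continuous_on {0..} (\<lambda>t. S t x)"
  unfolding continuous_on_iff
proof (intro ballI allI impI)
  fix t e :: real
  assume t: "t \<in> {0..}" and e: "e > 0"
  obtain M where M: "M \<ge> 1" "\<And>s y. s \<in> {0..t} \<Longrightarrow> norm (S s y) \<le> M * norm y"
    using bounded_on_interval by blast
  obtain b where b: "b > 0" "\<And>s. 0 \<le> s \<Longrightarrow> s < b \<Longrightarrow> norm (S s x - x) < e / M"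
    using orbit_near_identity[of "e / M" x] e M by auto
  have "dist (S t' x) (S t x) < e" if t': "t' \<in> {0..}" "dist t' t < b" for t'
  proof -
    \<comment> \<open>Both directions reduce to the increment at 0, moved by the earlier of the two times.\<close>
    have "norm (S t' x - S t x) \<le> M * norm (S \<bar>t' - t\<bar> x - x)"
    proof (cases "t \<le> t'")
      case True
      then have "S t' x - S t x = S t (S (t' - t) x - x)"
        using S_add[of t "t' - t"] S_diff t by simp
      then show ?thesis using M(2)[of t] t True by simp
    next
      case False
      then have "S t' x - S t x = - S t' (S (t - t') x - x)"
        using S_add[of t' "t - t'"] S_diff t' by simp
      then show ?thesis using M(2)[of t'] t' False by simp
    qed
    also have "\<dots> < M * (e / M)"
      using b(2)[of "\<bar>t' - t\<bar>"] t' M by (intro mult_strict_left_mono) (auto simp: dist_real_def)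
    finally show ?thesis using M by (simp add: dist_norm)
  qed
  then show "\<exists>d>0. \<forall>t'\<in>{0..}. dist t' t < d \<longrightarrow> dist (S t' x) (S t x) < e"
    using b by blast
qed

lemma continuous_on_S_compose:
  fixes U :: "'b::metric_space set"
  assumes f: "continuous_on U f" and p: "continuous_on U p" and p0: "\<And>s. s \<in> U \<Longrightarrow> p s \<ge> 0"
  shows "continuous_on U (\<lambda>s. S (p s) (f s))"
  unfolding continuous_on_iff
proof (intro ballI allI impI)
  fix s and e :: real
  assume s: "s \<in> U" and e: "e > 0"
  obtain M where M: "M \<ge> 1" "\<And>t y. t \<in> {0..p s + 1} \<Longrightarrow> norm (S t y) \<le> M * norm y"
    using bounded_on_interval by blast
  have "continuous_on U (\<lambda>s'. S (p s') (f s))"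
    using p p0 by (intro continuous_on_compose2[OF continuous_on_orbit]) auto
  then obtain d1 where d1: "d1 > 0"
    "\<And>s'. s' \<in> U \<Longrightarrow> dist s' s < d1 \<Longrightarrow> dist (S (p s') (f s)) (S (p s) (f s)) < e / 2"
    using s e unfolding continuous_on_iff by (meson half_gt_zero)
  have "e / (2 * M) > 0"
    using e M by simp
  then obtain d2 where d2: "d2 > 0"
    "\<And>s'. s' \<in> U \<Longrightarrow> dist s' s < d2 \<Longrightarrow> dist (f s') (f s) < e / (2 * M)"
    using f s unfolding continuous_on_iff by blast
  obtain d3 where d3: "d3 > 0" "\<And>s'. s' \<in> U \<Longrightarrow> dist s' s < d3 \<Longrightarrow> dist (p s') (p s) < 1"
    using p s unfolding continuous_on_iff by (meson zero_less_one)
  have "dist (S (p s') (f s')) (S (p s) (f s)) < e"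
    if s': "s' \<in> U" "dist s' s < min d1 (min d2 d3)" for s'
  proof -
    have ps': "p s' \<in> {0..p s + 1}"
      using p0[OF s'(1)] d3(2)[OF s'(1)] s'(2) by (auto simp: dist_real_def)
    have "S (p s') (f s') - S (p s) (f s) = S (p s') (f s' - f s) + (S (p s') (f s) - S (p s) (f s))"
      using S_diff[of "p s'"] ps' by simp
    then have "norm (S (p s') (f s') - S (p s) (f s))
        \<le> M * norm (f s' - f s) + norm (S (p s') (f s) - S (p s) (f s))"
      using M(2)[OF ps'] by (metis add_right_mono norm_triangle_ineq order_trans)
    also have "\<dots> < M * (e / (2 * M)) + e / 2"
      using d1(2)[OF s'(1)] d2(2)[OF s'(1)] s'(2) M
      by (intro add_le_less_mono mult_left_mono) (auto simp: dist_norm)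
    also have "\<dots> = e" using M by simp
    finally show ?thesis by (simp add: dist_norm)
  qed
  then show "\<exists>d>0. \<forall>s'\<in>U. dist s' s < d \<longrightarrow> dist (S (p s') (f s')) (S (p s) (f s)) < e"
    using d1 d2 d3 by (intro exI[of _ "min d1 (min d2 d3)"]) auto
qed

lemma norm_orbit_multiple_le:
  assumes s: "s \<ge> 0" and M: "\<And>t x. t \<in> {0..real N * s} \<Longrightarrow> norm (S t x) \<le> M * norm x"
  shows "norm (S (real N * s) u - u) \<le> real N * M * norm (S s u - u)"
proof -
  have step: "S (real (Suc j) * s) u - S (real j * s) u = S (real j * s) (S s u - u)" for j
    using S_add[of "real j * s" s u] S_diff[of "real j * s"] s by (simp add: algebra_simps)
  have "S (real N * s) u - u = (\<Sum>j<N. S (real j * s) (S s u - u))"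
    unfolding step[symmetric] by (subst sum_lessThan_telescope) simp
  then have "norm (S (real N * s) u - u) \<le> (\<Sum>j<N. norm (S (real j * s) (S s u - u)))"
    by (simp add: norm_sum)
  also have "\<dots> \<le> (\<Sum>j<N. M * norm (S s u - u))"
    using s by (intro sum_mono M) (auto intro: mult_right_mono)
  finally show ?thesis by simp
qed

lemma norm_orbit_increment_le:
  assumes gen: "semigroup_generator S D A" and u: "u \<in> D" and t: "t \<ge> 0"
    and M: "\<And>s x. s \<in> {0..t} \<Longrightarrow> norm (S s x) \<le> M * norm x"
  shows "norm (S t u - u) \<le> M * t * norm (A u)"
proof (cases "t = 0")
  case False
  define q where "q s = (1 / s) *\<^sub>R (S s u - u)" for s
  define \<sigma> where "\<sigma> n = t / real (Suc n)" for n
  have "\<sigma> \<longlonglongrightarrow> 0"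
    unfolding \<sigma>_def using LIMSEQ_Suc[OF lim_const_over_n[of t]] by simp
  then have "filterlim \<sigma> (at_right 0) sequentially"
    using t False by (intro tendsto_imp_filterlim_at_right) (auto simp: \<sigma>_def)
  moreover have "(q \<longlongrightarrow> A u) (at_right 0)"
    using gen u unfolding semigroup_generator_def q_def by blast
  ultimately have "(\<lambda>n. q (\<sigma> n)) \<longlonglongrightarrow> A u"
    using filterlim_compose by blast
  then have "(\<lambda>n. M * t * norm (q (\<sigma> n))) \<longlonglongrightarrow> M * t * norm (A u)"
    by (intro tendsto_intros)
  moreover have "norm (S t u - u) \<le> M * t * norm (q (\<sigma> n))" for n
  proof -
    have t_eq: "t = real (Suc n) * \<sigma> n" and \<sigma>: "\<sigma> n > 0"
      using t False by (auto simp: \<sigma>_def)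
    have "norm (S t u - u) \<le> real (Suc n) * M * norm (S (\<sigma> n) u - u)"
      using norm_orbit_multiple_le[of "\<sigma> n" "Suc n" M u] M \<sigma> by (simp add: t_eq)
    also have "\<dots> = M * t * norm (q (\<sigma> n))"
      using \<sigma> by (simp add: q_def t_eq)
    finally show ?thesis .
  qed
  ultimately show ?thesis
    by (intro tendsto_le[OF _ _ tendsto_const]) auto
qed simp

lemma norm_orbit_diff_le:
  assumes gen: "semigroup_generator S D A" and u: "u \<in> D" and "M \<ge> 0"
    and M: "\<And>s x. s \<in> {0..L} \<Longrightarrow> norm (S s x) \<le> M * norm x"
    and a: "a \<in> {0..L}" and b: "b \<in> {0..L}"
  shows "norm (S a u - S b u) \<le> M * M * \<bar>a - b\<bar> * norm (A u)"
proof -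
  have *: "norm (S a u - S b u) \<le> M * M * (a - b) * norm (A u)"
    if "b \<le> a" "a \<in> {0..L}" "b \<in> {0..L}" for a b
  proof -
    have "S a u - S b u = S b (S (a - b) u - u)"
      using S_add[of b "a - b" u] S_diff that by simp
    then have "norm (S a u - S b u) \<le> M * norm (S (a - b) u - u)"
      using M that by simp
    also have "\<dots> \<le> M * (M * (a - b) * norm (A u))"
      using norm_orbit_increment_le[OF gen u, of "a - b" M] M that \<open>M \<ge> 0\<close>
      by (intro mult_left_mono) auto
    finally show ?thesis by (simp add: algebra_simps)
  qed
  show ?thesis
    using *[of a b] *[of b a] a b by (cases "b \<le> a") (auto simp: norm_minus_commute)
qed

lemma norm_integral_midpoint_moment_le:
  assumes gen: "semigroup_generator S D A" and u: "u \<in> D" and \<tau>: "\<tau> \<ge> 0" and "M \<ge> 0"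
    and M: "\<And>s x. s \<in> {0..\<tau>} \<Longrightarrow> norm (S s x) \<le> M * norm x"
  shows "norm (integral {0..\<tau>} (\<lambda>s. (s - \<tau> / 2) *\<^sub>R S (\<tau> - s) u)) \<le> M * M * \<tau> ^ 3 * norm (A u)"
proof -
  \<comment> \<open>The weight has mean zero, so the orbit may be replaced by its deviation from the midpoint value.\<close>
  define P where "P s = (s - \<tau> / 2) *\<^sub>R (S (\<tau> - s) u - S (\<tau> / 2) u)" for s
  have "((\<lambda>s. s * s / 2 - \<tau> * s / 2) has_real_derivative (s - \<tau> / 2)) (at s within {0..\<tau>})" for s
    by (auto intro!: derivative_eq_intros simp: field_simps)
  then have "((\<lambda>s. s - \<tau> / 2) has_integral 0) {0..\<tau>}"
    using fundamental_theorem_of_calculus[of 0 \<tau> "\<lambda>s. s * s / 2 - \<tau> * s / 2" "\<lambda>s. s - \<tau> / 2"] \<tau>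
    by (simp add: has_real_derivative_iff_has_vector_derivative)
  from has_integral_scaleR_left[OF this, of "S (\<tau> / 2) u"]
  have zero_mean: "((\<lambda>s. (s - \<tau> / 2) *\<^sub>R S (\<tau> / 2) u) has_integral 0) {0..\<tau>}"
    by simp
  have cont: "continuous_on {0..\<tau>} P"
    unfolding P_def by (intro continuous_intros continuous_on_S_compose) auto
  then have "(P has_integral integral {0..\<tau>} P) {0..\<tau>}"
    using integrable_continuous_interval by blast
  from has_integral_add[OF this zero_mean]
  have "((\<lambda>s. (s - \<tau> / 2) *\<^sub>R S (\<tau> - s) u) has_integral integral {0..\<tau>} P) {0..\<tau>}"
    by (simp add: P_def scaleR_diff_right)
  then have "integral {0..\<tau>} (\<lambda>s. (s - \<tau> / 2) *\<^sub>R S (\<tau> - s) u) = integral {0..\<tau>} P"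
    by (rule integral_unique)
  also have "norm \<dots> \<le> (\<tau> * (M * M * \<tau> * norm (A u))) * (\<tau> - 0)"
  proof (rule integral_bound[OF \<tau> cont])
    fix s
    assume s: "s \<in> {0..\<tau>}"
    have "norm (S (\<tau> - s) u - S (\<tau> / 2) u) \<le> M * M * \<bar>(\<tau> - s) - \<tau> / 2\<bar> * norm (A u)"
      using s \<tau> by (intro norm_orbit_diff_le[OF gen u \<open>M \<ge> 0\<close> M]) auto
    also have "\<dots> \<le> M * M * \<tau> * norm (A u)"
      using s \<open>M \<ge> 0\<close> by (intro mult_right_mono mult_left_mono) auto
    finally show "norm (P s) \<le> \<tau> * (M * M * \<tau> * norm (A u))"
      unfolding P_def using s by (auto intro!: mult_mono)
  qed
  finally show ?thesis
    by (simp add: power3_eq_cube algebra_simps)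
qed

lemma mild_sol_step:
  assumes hc: "continuous_on {0..} (\<lambda>s. h (s powr r))" and t: "t \<ge> 0" and \<tau>: "\<tau> \<ge> 0"
  shows "mild_sol S h r y0 (t + \<tau>)
    = S \<tau> (mild_sol S h r y0 t) + integral {0..\<tau>} (\<lambda>s. S (\<tau> - s) (h ((t + s) powr r)))"
proof -
  define F where "F = (\<lambda>s. S (t + \<tau> - s) (h (s powr r)))"
  have cont: "continuous_on {0..b} (\<lambda>s. S (b - s) (h (s powr r)))" for b
    by (intro continuous_on_S_compose continuous_on_subset[OF hc] continuous_intros) auto
  have "integral {0..t} F + integral {t..t + \<tau>} F = integral {0..t + \<tau>} F"
    using t \<tau> integrable_continuous_interval[OF cont[of "t + \<tau>"]]
    unfolding F_def by (intro Henstock_Kurzweil_Integration.integral_combine) auto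
  moreover have "integral {0..t} F = S \<tau> (integral {0..t} (\<lambda>s. S (t - s) (h (s powr r))))"
  proof -
    have "integral {0..t} F = integral {0..t} (\<lambda>s. S \<tau> (S (t - s) (h (s powr r))))"
    proof (rule integral_cong)
      fix s
      assume "s \<in> {0..t}"
      then have "t - s \<ge> 0" by simp
      moreover have "t + \<tau> - s = \<tau> + (t - s)" by simp
      ultimately show "F s = S \<tau> (S (t - s) (h (s powr r)))"
        unfolding F_def using S_add[OF \<tau>] by presburger
    qed
    also have "\<dots> = S \<tau> (integral {0..t} (\<lambda>s. S (t - s) (h (s powr r))))"
      using integral_linear[OF integrable_continuous_interval[OF cont] bounded_linear_S[OF \<tau>]]
      by (simp add: o_def)
    finally show ?thesis .
  qed
  moreover have "integral {t..t + \<tau>} F = integral {0..\<tau>} (\<lambda>s. S (\<tau> - s) (h ((t + s) powr r)))"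
    using integral_shift_Icc_real[of 0 \<tau> F t] by (simp add: F_def o_def add.commute)
  ultimately show ?thesis
    using S_add[OF \<tau> t, of y0] S_plus[OF \<tau>]
    by (simp add: mild_sol_def F_def add.commute)
qed

end

definition local_defect :: "(real \<Rightarrow> 'a::banach \<Rightarrow> 'a) \<Rightarrow> (real \<Rightarrow> 'a) \<Rightarrow> real \<Rightarrow> real \<Rightarrow> real \<Rightarrow> real \<Rightarrow> 'a" where
  "local_defect S h r c1 \<tau> t =
     integral {0..\<tau>} (\<lambda>s. S (\<tau> - s) (h ((t + s) powr r) - h ((t + c1 * \<tau>) powr r)))"

context C0_semigroup
begin

lemma error_step:
  assumes hc: "continuous_on {0..} (\<lambda>s. h (s powr r))" and \<tau>: "\<tau> > 0"
  shows "mild_sol S h r y0 (real (Suc n) * \<tau>) - eqrf1 S h r c1 \<tau> y0 (Suc n)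
    = S \<tau> (mild_sol S h r y0 (real n * \<tau>) - eqrf1 S h r c1 \<tau> y0 n)
      + local_defect S h r c1 \<tau> (real n * \<tau>)"
proof -
  define t where "t = real n * \<tau>"
  define v where "v = h ((t + c1 * \<tau>) powr r)"
  have t: "t \<ge> 0" and \<tau>0: "\<tau> \<ge> 0"
    using \<tau> by (simp_all add: t_def)
  have "(\<lambda>s. S (\<tau> - s) (h ((t + s) powr r))) integrable_on {0..\<tau>}"
    using t by (intro integrable_continuous_interval continuous_on_S_compose
        continuous_on_compose2[OF hc] continuous_intros) auto
  moreover have "(\<lambda>s. S (\<tau> - s) v) integrable_on {0..\<tau>}"
    by (intro integrable_continuous_interval continuous_on_S_compose continuous_intros) auto
  ultimately have "local_defect S h r c1 \<tau> t
      = integral {0..\<tau>} (\<lambda>s. S (\<tau> - s) (h ((t + s) powr r))) - integral {0..\<tau>} (\<lambda>s. S (\<tau> - s) v)"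
    unfolding local_defect_def v_def[symmetric]
    by (subst integral_diff[symmetric]) (auto intro!: integral_cong simp: S_diff)
  moreover have "\<tau> *\<^sub>R phi1 S \<tau> v = integral {0..\<tau>} (\<lambda>s. S (\<tau> - s) v)"
    unfolding phi1_def using \<tau> by simp
  moreover have "real (Suc n) * \<tau> = t + \<tau>"
    by (simp add: t_def algebra_simps)
  ultimately show ?thesis
    using mild_sol_step[OF hc t \<tau>0, of y0]
    by (simp add: t_def v_def S_diff[OF \<tau>0] algebra_simps)
qed

lemma discrete_variation_of_constants:
  assumes \<tau>: "\<tau> \<ge> 0" and e0: "e 0 = 0" and e_Suc: "\<And>k. e (Suc k) = S \<tau> (e k) + d k"
  shows "e n = (\<Sum>k<n. S (real (n - Suc k) * \<tau>) (d k))"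
proof (induction n)
  case (Suc n)
  have "S \<tau> (S (real (n - Suc k) * \<tau>) (d k)) = S (real (Suc n - Suc k) * \<tau>) (d k)" if "k < n" for k
  proof -
    have "real (Suc n - Suc k) * \<tau> = \<tau> + real (n - Suc k) * \<tau>"
      using that by (simp add: of_nat_diff algebra_simps)
    then show ?thesis using S_add \<tau> by simp
  qed
  then have "S \<tau> (e n) = (\<Sum>k<n. S (real (Suc n - Suc k) * \<tau>) (d k))"
    by (simp add: Suc.IH S_sum[OF \<tau>])
  then show ?case
    by (simp add: e_Suc)
qed (simp add: e0)

lemma norm_global_error_le:
  assumes hc: "continuous_on {0..} (\<lambda>s. h (s powr r))" and \<tau>: "\<tau> > 0"
    and M: "\<And>s x. s \<in> {0..real n * \<tau>} \<Longrightarrow> norm (S s x) \<le> M * norm x"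
  shows "norm (mild_sol S h r y0 (real n * \<tau>) - eqrf1 S h r c1 \<tau> y0 n)
    \<le> M * (\<Sum>k<n. norm (local_defect S h r c1 \<tau> (real k * \<tau>)))"
proof -
  have "mild_sol S h r y0 (real n * \<tau>) - eqrf1 S h r c1 \<tau> y0 n
      = (\<Sum>k<n. S (real (n - Suc k) * \<tau>) (local_defect S h r c1 \<tau> (real k * \<tau>)))"
    using \<tau> by (intro discrete_variation_of_constants[where e="\<lambda>k. mild_sol S h r y0 (real k * \<tau>) - eqrf1 S h r c1 \<tau> y0 k"]
        error_step[OF hc]) (auto simp: mild_sol_def)
  also have "norm \<dots> \<le> (\<Sum>k<n. M * norm (local_defect S h r c1 \<tau> (real k * \<tau>)))"
    using \<tau> by (intro order_trans[OF norm_sum sum_mono] M) (auto simp: mult_right_mono)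
  finally show ?thesis
    by (simp add: sum_distrib_left)
qed

lemma norm_local_defect_le_first_order:
  assumes hc: "continuous_on {0..} (\<lambda>s. h (s powr r))"
    and lip: "\<And>x y. x \<ge> 0 \<Longrightarrow> y \<ge> 0 \<Longrightarrow> norm (h x - h y) \<le> L * \<bar>x - y\<bar>" and "L \<ge> 0"
    and "M \<ge> 0" and M: "\<And>s x. s \<in> {0..\<tau>} \<Longrightarrow> norm (S s x) \<le> M * norm x"
    and \<tau>: "\<tau> \<ge> 0" and t: "t \<ge> 0" and c1: "0 \<le> c1" "c1 \<le> 1" and r: "r \<ge> 0"
  shows "norm (local_defect S h r c1 \<tau> t) \<le> M * L * ((t + \<tau>) powr r - t powr r) * \<tau>"
proof -
  have "norm (integral {0..\<tau>} (\<lambda>s. S (\<tau> - s) (h ((t + s) powr r) - h ((t + c1 * \<tau>) powr r))))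
      \<le> M * L * ((t + \<tau>) powr r - t powr r) * (\<tau> - 0)"
  proof (rule integral_bound[OF \<tau>])
  show "continuous_on {0..\<tau>} (\<lambda>s. S (\<tau> - s) (h ((t + s) powr r) - h ((t + c1 * \<tau>) powr r)))"
    using t by (intro continuous_on_S_compose continuous_on_compose2[OF hc] continuous_intros) auto
  fix s
  assume s: "s \<in> {0..\<tau>}"
  have "c1 * \<tau> \<le> \<tau>"
    using c1 \<tau> by (simp add: mult_left_le_one_le)
  then have "\<bar>(t + s) powr r - (t + c1 * \<tau>) powr r\<bar> \<le> (t + \<tau>) powr r - t powr r"
    using s c1 \<tau> t r by (intro abs_powr_diff_le) auto
  then have "norm (h ((t + s) powr r) - h ((t + c1 * \<tau>) powr r)) \<le> L * ((t + \<tau>) powr r - t powr r)"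
    using lip[of "(t + s) powr r" "(t + c1 * \<tau>) powr r"] \<open>L \<ge> 0\<close>
    by (smt (verit) mult_left_mono powr_ge_zero)
  then show "norm (S (\<tau> - s) (h ((t + s) powr r) - h ((t + c1 * \<tau>) powr r)))
      \<le> M * L * ((t + \<tau>) powr r - t powr r)"
    using M[of "\<tau> - s"] s \<open>M \<ge> 0\<close> by (smt (verit) atLeastAtMost_iff mult.assoc mult_left_mono)
  qed
  then show ?thesis
    unfolding local_defect_def by simp
qed

lemma norm_local_defect_midpoint_le:
  assumes gen: "semigroup_generator S D A" and u: "u \<in> D"
    and hc: "continuous_on {0..} (\<lambda>s. h (s powr r))" and t: "t \<ge> 0" and \<tau>: "\<tau> \<ge> 0"
    and "M \<ge> 0" and M: "\<And>s x. s \<in> {0..\<tau>} \<Longrightarrow> norm (S s x) \<le> M * norm x"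
    and lin: "\<And>s. s \<in> {0..\<tau>} \<Longrightarrow>
      norm (h ((t + s) powr r) - h ((t + \<tau> / 2) powr r) - (s - \<tau> / 2) *\<^sub>R (c *\<^sub>R u)) \<le> \<rho>"
  shows "norm (local_defect S h r (1 / 2) \<tau> t) \<le> \<bar>c\<bar> * (M * M * \<tau> ^ 3 * norm (A u)) + M * \<rho> * \<tau>"
proof -
  define R where "R s = h ((t + s) powr r) - h ((t + \<tau> / 2) powr r) - (s - \<tau> / 2) *\<^sub>R (c *\<^sub>R u)" for s
  have cont_R: "continuous_on {0..\<tau>} (\<lambda>s. S (\<tau> - s) (R s))"
    unfolding R_def using t
    by (intro continuous_on_S_compose continuous_on_compose2[OF hc] continuous_intros) auto
  have cont_moment: "continuous_on {0..\<tau>} (\<lambda>s. (s - \<tau> / 2) *\<^sub>R S (\<tau> - s) u)"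
    by (intro continuous_on_S_compose continuous_intros) auto
  have "local_defect S h r (1 / 2) \<tau> t
      = integral {0..\<tau>} (\<lambda>s. c *\<^sub>R ((s - \<tau> / 2) *\<^sub>R S (\<tau> - s) u) + S (\<tau> - s) (R s))"
    unfolding local_defect_def
  proof (rule integral_cong)
    fix s
    assume "s \<in> {0..\<tau>}"
    then have "\<tau> - s \<ge> 0" by simp
    moreover have "h ((t + s) powr r) - h ((t + 1 / 2 * \<tau>) powr r) = c *\<^sub>R ((s - \<tau> / 2) *\<^sub>R u) + R s"
      by (simp add: R_def)
    ultimately show "S (\<tau> - s) (h ((t + s) powr r) - h ((t + 1 / 2 * \<tau>) powr r))
        = c *\<^sub>R ((s - \<tau> / 2) *\<^sub>R S (\<tau> - s) u) + S (\<tau> - s) (R s)"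
      by (simp add: S_plus S_scaleR)
  qed
  also have "\<dots> = c *\<^sub>R integral {0..\<tau>} (\<lambda>s. (s - \<tau> / 2) *\<^sub>R S (\<tau> - s) u)
      + integral {0..\<tau>} (\<lambda>s. S (\<tau> - s) (R s))"
  proof -
    have "(\<lambda>s. c *\<^sub>R ((s - \<tau> / 2) *\<^sub>R S (\<tau> - s) u)) integrable_on {0..\<tau>}"
      by (intro integrable_cmul integrable_continuous_interval[OF cont_moment])
    with integrable_continuous_interval[OF cont_R] show ?thesis
      by (simp only: integral_add integral_cmul)
  qed
  also have "norm \<dots> \<le> \<bar>c\<bar> * (M * M * \<tau> ^ 3 * norm (A u)) + M * \<rho> * (\<tau> - 0)"
  proof (rule order_trans[OF norm_triangle_ineq add_mono])
    show "norm (c *\<^sub>R integral {0..\<tau>} (\<lambda>s. (s - \<tau> / 2) *\<^sub>R S (\<tau> - s) u))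
        \<le> \<bar>c\<bar> * (M * M * \<tau> ^ 3 * norm (A u))"
      using norm_integral_midpoint_moment_le[OF gen u \<tau> \<open>M \<ge> 0\<close> M] by (simp add: mult_left_mono)
    show "norm (integral {0..\<tau>} (\<lambda>s. S (\<tau> - s) (R s))) \<le> M * \<rho> * (\<tau> - 0)"
    proof (rule integral_bound[OF \<tau> cont_R])
      fix s
      assume "s \<in> {0..\<tau>}"
      then show "norm (S (\<tau> - s) (R s)) \<le> M * \<rho>"
        using M[of "\<tau> - s" "R s"] lin[of s] \<open>M \<ge> 0\<close> unfolding R_def
        by (smt (verit) atLeastAtMost_iff mult_left_mono)
    qed
  qed
  finally show ?thesis by simp
qed

lemma norm_local_defect_le_second_order:
  assumes gen: "semigroup_generator S D A"
    and hd: "\<forall>x\<ge>0. (h has_vector_derivative h' x) (at x within {0..})"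
    and bound: "\<And>x. x \<ge> 0 \<Longrightarrow> norm (h' x) \<le> L1"
    and lip: "\<And>x y. x \<ge> 0 \<Longrightarrow> y \<ge> 0 \<Longrightarrow> norm (h' x - h' y) \<le> L2 * \<bar>x - y\<bar>"
    and hD: "\<And>x. x \<ge> 0 \<Longrightarrow> h' x \<in> D" and AK: "\<And>x. x \<ge> 0 \<Longrightarrow> norm (A (h' x)) \<le> K"
    and "M \<ge> 0" and M: "\<And>s x. s \<in> {0..\<tau>} \<Longrightarrow> norm (S s x) \<le> M * norm x"
    and \<tau>: "\<tau> > 0" and t: "t \<ge> \<tau>" and r: "0 < r" "r < 1"
  shows "norm (local_defect S h r (1 / 2) \<tau> t)
    \<le> \<tau> powr (1 + r) * (M * M * K * \<tau> + M * L2 * ((t + \<tau>) powr r - t powr r))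
      + M * L1 * \<tau> ^ 2 * (t powr (r - 1) - (t + \<tau>) powr (r - 1))"
proof -
  define m where "m = t + \<tau> / 2"
  define Q where "Q = L1 * (t powr (r - 1) - (t + \<tau>) powr (r - 1)) + \<tau> powr (r - 1) * L2 * ((t + \<tau>) powr r - t powr r)"
  have "norm (local_defect S h r (1 / 2) \<tau> t)
      \<le> \<bar>r * m powr (r - 1)\<bar> * (M * M * \<tau> ^ 3 * norm (A (h' (m powr r)))) + M * (\<tau> * Q) * \<tau>"
    unfolding m_def Q_def using \<tau> t hD
    by (intro norm_local_defect_midpoint_le[OF gen _ continuous_on_comp_powr[OF hd r(1)] _ _ \<open>M \<ge> 0\<close> M]
        norm_comp_powr_midpoint_linearization_le[OF hd bound lip \<tau> t r]) auto
  also have "\<dots> \<le> \<tau> powr (r - 1) * (M * M * \<tau> ^ 3 * K) + M * \<tau> ^ 2 * Q"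
  proof -
    have "\<bar>r * m powr (r - 1)\<bar> \<le> m powr (r - 1)"
      using r by (simp add: abs_mult mult_left_le_one_le)
    also have "\<dots> \<le> \<tau> powr (r - 1)"
      using t \<tau> r by (intro powr_mono2') (auto simp: m_def)
    finally have "\<bar>r * m powr (r - 1)\<bar> \<le> \<tau> powr (r - 1)" .
    moreover have "M * M * \<tau> ^ 3 * norm (A (h' (m powr r))) \<le> M * M * \<tau> ^ 3 * K"
      using AK[of "m powr r"] \<open>M \<ge> 0\<close> \<tau> by (intro mult_left_mono) auto
    ultimately have "\<bar>r * m powr (r - 1)\<bar> * (M * M * \<tau> ^ 3 * norm (A (h' (m powr r))))
        \<le> \<tau> powr (r - 1) * (M * M * \<tau> ^ 3 * K)"
      by (rule mult_mono) (use \<open>M \<ge> 0\<close> \<tau> in auto)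
    then show ?thesis
      by (simp add: power2_eq_square algebra_simps)
  qed
  also have "\<dots> = \<tau> powr (1 + r) * (M * M * K * \<tau> + M * L2 * ((t + \<tau>) powr r - t powr r))
      + M * L1 * \<tau> ^ 2 * (t powr (r - 1) - (t + \<tau>) powr (r - 1))"
    unfolding Q_def powr_one_add_eq(2)[OF \<tau>] by (simp add: power2_eq_square power3_eq_cube algebra_simps)
  finally show ?thesis .
qed

lemma first_order_error_bound:
  assumes hd: "\<forall>x\<ge>0. (h has_vector_derivative h' x) (at x within {0..})"
    and bound: "\<And>x. x \<ge> 0 \<Longrightarrow> norm (h' x) \<le> L"
    and "M \<ge> 0" and M: "\<And>s x. s \<in> {0..T} \<Longrightarrow> norm (S s x) \<le> M * norm x"
    and r: "r > 0" and c1: "0 \<le> c1" "c1 \<le> 1" and \<tau>: "\<tau> > 0" "\<tau> \<le> T" and n: "real n * \<tau> \<le> T"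
  shows "norm (mild_sol S h r y0 (real n * \<tau>) - eqrf1 S h r c1 \<tau> y0 n) \<le> M * M * L * T powr r * \<tau>"
proof -
  define F where "F k = (real k * \<tau>) powr r" for k
  have hc: "continuous_on {0..} (\<lambda>s. h (s powr r))"
    by (rule continuous_on_comp_powr[OF hd r])
  have lip: "norm (h x - h y) \<le> L * \<bar>x - y\<bar>" if "x \<ge> 0" "y \<ge> 0" for x y
    using hd bound that by (intro norm_diff_le_of_vector_derivative_bound[of "{0..}"]) auto
  have "L \<ge> 0"
    using bound[of 0] norm_ge_zero order_trans by blast
  have "norm (mild_sol S h r y0 (real n * \<tau>) - eqrf1 S h r c1 \<tau> y0 n)
      \<le> M * (\<Sum>k<n. norm (local_defect S h r c1 \<tau> (real k * \<tau>)))"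
    using n by (intro norm_global_error_le[OF hc \<tau>(1)] M) auto
  also have "\<dots> \<le> M * (\<Sum>k<n. M * L * \<tau> * (F (Suc k) - F k))"
  proof (intro mult_left_mono[OF sum_mono \<open>M \<ge> 0\<close>])
    fix k
    have "norm (local_defect S h r c1 \<tau> (real k * \<tau>))
        \<le> M * L * ((real k * \<tau> + \<tau>) powr r - (real k * \<tau>) powr r) * \<tau>"
      using \<tau> c1 r by (intro norm_local_defect_le_first_order[OF hc lip \<open>L \<ge> 0\<close> \<open>M \<ge> 0\<close>] M) auto
    then show "norm (local_defect S h r c1 \<tau> (real k * \<tau>)) \<le> M * L * \<tau> * (F (Suc k) - F k)"
      by (simp add: F_def algebra_simps)
  qed
  also have "\<dots> = M * M * L * \<tau> * F n"
    using r by (simp add: sum_distrib_left[symmetric] sum_lessThan_telescope) (simp add: F_def)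
  also have "\<dots> \<le> M * M * L * \<tau> * T powr r"
    using n \<tau> r \<open>M \<ge> 0\<close> \<open>L \<ge> 0\<close> unfolding F_def by (intro mult_left_mono powr_mono2) auto
  finally show ?thesis
    by (simp add: algebra_simps)
qed

lemma second_order_error_bound:
  assumes gen: "semigroup_generator S D A"
    and hd: "\<forall>x\<ge>0. (h has_vector_derivative h' x) (at x within {0..})"
    and h'd: "\<forall>x\<ge>0. (h' has_vector_derivative h'' x) (at x within {0..})"
    and bound1: "\<And>x. x \<ge> 0 \<Longrightarrow> norm (h' x) \<le> L1" and bound2: "\<And>x. x \<ge> 0 \<Longrightarrow> norm (h'' x) \<le> L2"
    and hD: "\<And>x. x \<ge> 0 \<Longrightarrow> h' x \<in> D" and AK: "\<And>x. x \<ge> 0 \<Longrightarrow> norm (A (h' x)) \<le> K"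
    and "M \<ge> 0" and M: "\<And>s x. s \<in> {0..T} \<Longrightarrow> norm (S s x) \<le> M * norm x"
    and r: "0 < r" "r < 1" and \<tau>: "\<tau> > 0" "\<tau> \<le> T" and n: "real n * \<tau> \<le> T"
  shows "norm (mild_sol S h r y0 (real n * \<tau>) - eqrf1 S h r (1 / 2) \<tau> y0 n)
    \<le> M * (2 * M * L1 + M * M * K * T + M * L2 * T powr r) * \<tau> powr (1 + r)"
proof -
  define d where "d k = norm (local_defect S h r (1 / 2) \<tau> (real k * \<tau>))" for k
  have hc: "continuous_on {0..} (\<lambda>s. h (s powr r))"
    by (rule continuous_on_comp_powr[OF hd r(1)])
  have lip1: "norm (h x - h y) \<le> L1 * \<bar>x - y\<bar>" if "x \<ge> 0" "y \<ge> 0" for x y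
    using hd bound1 that by (intro norm_diff_le_of_vector_derivative_bound[of "{0..}"]) auto
  have lip2: "norm (h' x - h' y) \<le> L2 * \<bar>x - y\<bar>" if "x \<ge> 0" "y \<ge> 0" for x y
    using h'd bound2 that by (intro norm_diff_le_of_vector_derivative_bound[of "{0..}"]) auto
  have L: "L1 \<ge> 0" "L2 \<ge> 0" "K \<ge> 0"
    using bound1[of 0] bound2[of 0] AK[of 0] norm_ge_zero order_trans by blast+
  have M\<tau>: "norm (S s x) \<le> M * norm x" if "s \<in> {0..\<tau>}" for s x
    using M that \<tau> by auto
  \<comment> \<open>The first step is only first-order accurate: t powr (r - 1) blows up at t = 0.\<close>
  have "d 0 \<le> M * L1 * ((0 + \<tau>) powr r - 0 powr r) * \<tau>"
    unfolding d_def of_nat_0 mult_zero_left using \<tau> r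
    by (intro norm_local_defect_le_first_order[OF hc lip1 L(1) \<open>M \<ge> 0\<close> M\<tau>]) auto
  then have d0: "d 0 \<le> \<tau> powr (1 + r) * (M * L1)"
    using r powr_one_add_eq(1)[OF \<tau>(1), of r] by (simp add: mult_ac)
  have d_Suc: "d (Suc k) \<le> \<tau> powr (1 + r) * (M * M * K * \<tau>
        + M * L2 * ((real (Suc (Suc k)) * \<tau>) powr r - (real (Suc k) * \<tau>) powr r))
      + M * L1 * \<tau> ^ 2 * ((real (Suc k) * \<tau>) powr (r - 1) - (real (Suc (Suc k)) * \<tau>) powr (r - 1))" for k
    using norm_local_defect_le_second_order[OF gen hd bound1 lip2 hD AK \<open>M \<ge> 0\<close> M\<tau> \<tau>(1) _ r,
        of "real (Suc k) * \<tau>"] \<tau>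
    by (simp add: d_def algebra_simps)
  have sum_d: "(\<Sum>k<n. d k) \<le> \<tau> powr (1 + r) * (2 * M * L1 + M * M * K * T + M * L2 * T powr r)"
  proof (cases n)
    case 0
    then show ?thesis using L \<open>M \<ge> 0\<close> \<tau> by simp
  next
    case (Suc m)
    have "(\<Sum>k<n. d k) = d 0 + (\<Sum>k<m. d (Suc k))"
      by (simp only: Suc sum.lessThan_Suc_shift)
    also have "\<dots> \<le> \<tau> powr (1 + r) * (M * L1) + \<tau> powr (1 + r) * (M * M * K * T + M * L2 * T powr r + M * L1)"
      using \<open>M \<ge> 0\<close> L n \<tau>(1) r
      by (intro add_mono d0 order_trans[OF sum_mono[OF d_Suc] sum_second_order_step_bounds_le])
        (auto simp: Suc)
    finally show ?thesis
      by (simp add: algebra_simps)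
  qed
  have "norm (mild_sol S h r y0 (real n * \<tau>) - eqrf1 S h r (1 / 2) \<tau> y0 n) \<le> M * (\<Sum>k<n. d k)"
    unfolding d_def using n by (intro norm_global_error_le[OF hc \<tau>(1)] M) auto
  also have "\<dots> \<le> M * (\<tau> powr (1 + r) * (2 * M * L1 + M * M * K * T + M * L2 * T powr r))"
    using sum_d \<open>M \<ge> 0\<close> by (rule mult_left_mono)
  finally show ?thesis
    by (simp add: algebra_simps)
qed

end

theorem theorem1:
  fixes S :: "real \<Rightarrow> 'a::banach \<Rightarrow> 'a" and A :: "'a \<Rightarrow> 'a" and D :: "'a set"
    and h h' h'' :: "real \<Rightarrow> 'a" and T r c1 :: real
  assumes sg: "strongly_continuous_semigroup S"
    and gen: "semigroup_generator S D A"
    and T: "T > 0" and r: "0 < r" "r < 1" and c1: "0 \<le> c1" "c1 \<le> 1"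
    and hd: "\<forall>x\<ge>0. (h has_vector_derivative h' x) (at x within {0..})"
    and hdb: "bounded (h' ` {0..})"
  shows
    "(\<exists>C. \<forall>y0 N n. N \<ge> 1 \<longrightarrow> n \<le> N \<longrightarrow>
        norm (mild_sol S h r y0 (real n * (T / real N)) - eqrf1 S h r c1 (T / real N) y0 n)
          \<le> C * (T / real N))
     \<and>
     ((\<forall>x\<ge>0. (h' has_vector_derivative h'' x) (at x within {0..})) \<and>
      bounded (h'' ` {0..}) \<and>
      (\<forall>x\<ge>0. h' x \<in> D) \<and>
      bounded ((\<lambda>x. A (h' x)) ` {0..}) \<and>
      c1 = 1 / 2
      \<longrightarrow>
      (\<exists>C. \<forall>y0 N n. N \<ge> 1 \<longrightarrow> n \<le> N \<longrightarrow>
        norm (mild_sol S h r y0 (real n * (T / real N)) - eqrf1 S h r c1 (T / real N) y0 n)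
          \<le> C * (T / real N) powr (1 + r)))"
proof -
  interpret C0_semigroup S
    by unfold_locales (fact sg)
  obtain M where "M \<ge> 1" and M: "\<And>s x. s \<in> {0..T} \<Longrightarrow> norm (S s x) \<le> M * norm x"
    using bounded_on_interval by blast
  obtain L1 where L1: "\<And>x. x \<ge> 0 \<Longrightarrow> norm (h' x) \<le> L1"
    using hdb unfolding bounded_iff by auto
  have grid: "T / real N > 0" "T / real N \<le> T" "real n * (T / real N) \<le> T"
    if "N \<ge> 1" "n \<le> N" for N n :: nat
    using T that by (auto simp: field_simps)
  show ?thesis (is "?first_order \<and> (?hyps \<longrightarrow> ?second_order)")
  proof (intro conjI impI)
    show ?first_order
      using \<open>M \<ge> 1\<close> grid r c1
      by (intro exI[of _ "M * M * L1 * T powr r"] allI impI first_order_error_bound[OF hd L1 _ M]) auto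
    assume H: ?hyps
    then have h'd: "\<forall>x\<ge>0. (h' has_vector_derivative h'' x) (at x within {0..})"
      and hD: "\<And>x. x \<ge> 0 \<Longrightarrow> h' x \<in> D" and c1_eq: "c1 = 1 / 2"
      by auto
    obtain L2 where L2: "\<And>x. x \<ge> 0 \<Longrightarrow> norm (h'' x) \<le> L2"
      using H unfolding bounded_iff by auto
    obtain K where "\<forall>x\<in>{0..}. norm (A (h' x)) \<le> K"
      using H unfolding bounded_iff by auto
    then have K: "\<And>x. x \<ge> 0 \<Longrightarrow> norm (A (h' x)) \<le> K"
      by simp
    show ?second_order
      unfolding c1_eq using \<open>M \<ge> 1\<close> grid r
      by (intro exI[of _ "M * (2 * M * L1 + M * M * K * T + M * L2 * T powr r)"] allI impI
          second_order_error_bound[OF gen hd h'd L1 L2 hD K _ M]) auto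
  qed
qed

end
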